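(* Let $\ell$ be a prime and let $R,S,T$ be pairwise coprime positive integers. Let $S'=\prod_{q:\ \operatorname{ord}_q(S)\text{ odd}} q$, let $v$ be the positive integer with $SS'=v^2$, let $u=RS'$, and write $TS'=mn^2$ with $m$ a squarefree positive integer and $n$ a positive integer. Let $K=\mathbb{Q}(\sqrt{-m})$, let $\epsilon\in K^*$ be a representative of an element of $\mathcal{E}$, and let $\mathfrak{q}$ be a prime ideal of the ring of integers of $K$. Suppose one of the following holds: (i) $\operatorname{ord}_{\mathfrak q}(v)$, $\operatorname{ord}_{\mathfrak q}(n\sqrt{-m})$, $\operatorname{ord}_{\mathfrak q}(\epsilon)$ are pairwise distinct modulo $\ell$; (ii) $\operatorname{ord}_{\mathfrak q}(2v)$, $\operatorname{ord}_{\mathfrak q}(\epsilon)$, $\operatorname{ord}_{\mathfrak q}(\overline{\epsilon})$ are pairwise distinct modulo $\ell$; (iii) $\operatorname{ord}_{\mathfrak q}(2n\sqrt{-m})$, $\operatorname{ord}_{\mathfrak q}(\epsilon)$, $\operatorname{ord}_{\mathfrak q}(\overline{\epsilon})$ are pairwise distinct modulo $\ell$. Then there are no $\sigma\in\mathbb{Z}$ and $\eta\in K$ satisfying \[ v\sigma^\ell+n\sqrt{-m}=\epsilon\eta^\ell . \]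
   Context: $\mathcal{O}$ denotes the ring of integers of $K$ and $\overline{\cdot}$ complex conjugation. Let $\mathfrak{S}$ be the set of prime ideals of $\mathcal{O}$ dividing $u$ or $2n\sqrt{-m}$. The $\ell$-Selmer group is $K(\mathfrak{S},\ell)=\{\epsilon\in K^*/K^{*\ell}:\operatorname{ord}_{\mathfrak P}(\epsilon)\equiv 0\pmod\ell \text{ for all prime ideals }\mathfrak P\notin\mathfrak{S}\}$, and $\mathcal{E}=\{\epsilon\in K(\mathfrak{S},\ell): \operatorname{Norm}(\epsilon)/u\in\mathbb{Q}^{*\ell}\}$. *)

theory Defs
  imports "HOL-Algebra.Ideal_Product" "HOL-Computational_Algebra.Polynomial"
    "HOL-Computational_Algebra.Squarefree" "HOL-Number_Theory.Cong"
begin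

definition sqrt_neg :: "nat \<Rightarrow> complex" where
  "sqrt_neg m = \<i> * complex_of_real (sqrt (real m))"

definition QF :: "nat \<Rightarrow> complex set" where
  "QF m = {of_rat a + of_rat b * sqrt_neg m | a b. True}"

definition OK :: "nat \<Rightarrow> complex set" where
  "OK m = {x \<in> QF m. algebraic_int x}"

definition OK_ring :: "nat \<Rightarrow> complex ring" where
  "OK_ring m = \<lparr>carrier = OK m, monoid.mult = (*), one = 1, zero = 0, add = (+)\<rparr>"

definition prime_ideal_OK :: "nat \<Rightarrow> complex set \<Rightarrow> bool" where
  "prime_ideal_OK m P \<longleftrightarrow> primeideal P (OK_ring m) \<and> P \<noteq> {0}"

definition ideal_pow :: "nat \<Rightarrow> complex set \<Rightarrow> nat \<Rightarrow> complex set" where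
  "ideal_pow m P k = ((\<lambda>I. ideal_prod (OK_ring m) I P) ^^ k) (OK m)"

definition ordO :: "nat \<Rightarrow> complex set \<Rightarrow> complex \<Rightarrow> nat" where
  "ordO m P a = (GREATEST k. a \<in> ideal_pow m P k)"

definition ordK :: "nat \<Rightarrow> complex set \<Rightarrow> complex \<Rightarrow> int" where
  "ordK m P x = (SOME k. \<exists>a b. a \<in> OK m \<and> b \<in> OK m \<and> a \<noteq> 0 \<and> b \<noteq> 0 \<and> x = a / b
                      \<and> k = int (ordO m P a) - int (ordO m P b))"

definition normK :: "complex \<Rightarrow> complex" where
  "normK x = x * cnj x"

text \<open>x in K^* represents an element of the l-Selmer group K(S,l), where S is the set of
  primes dividing u or 2 n sqrt(-m).\<close>
definition selmer_rep :: "nat \<Rightarrow> nat \<Rightarrow> nat \<Rightarrow> nat \<Rightarrow> complex \<Rightarrow> bool" where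
  "selmer_rep m l u n x \<longleftrightarrow> x \<in> QF m \<and> x \<noteq> 0 \<and>
     (\<forall>P. prime_ideal_OK m P \<and> of_nat u \<notin> P \<and> 2 * of_nat n * sqrt_neg m \<notin> P
          \<longrightarrow> int l dvd ordK m P x)"

definition E_rep :: "nat \<Rightarrow> nat \<Rightarrow> nat \<Rightarrow> nat \<Rightarrow> complex \<Rightarrow> bool" where
  "E_rep m l u n x \<longleftrightarrow> selmer_rep m l u n x \<and>
     (\<exists>r::rat. r \<noteq> 0 \<and> normK x / of_nat u = of_rat (r ^ l))"

definition pw_distinct_mod :: "nat \<Rightarrow> int \<Rightarrow> int \<Rightarrow> int \<Rightarrow> bool" where
  "pw_distinct_mod l a b c \<longleftrightarrow>
     \<not> [a = b] (mod int l) \<and> \<not> [a = c] (mod int l) \<and> \<not> [b = c] (mod int l)"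

end

theory Submission
  imports Defs
begin

text \<open>Put \<open>A = v \<sigma>^l\<close>, \<open>B = n sqrt(-m)\<close> and \<open>C = \<epsilon> \<eta>^l\<close>. As \<open>A\<close> is rational and \<open>B\<close> purely
  imaginary, \<open>A + B = C\<close> also gives \<open>A - B = cnj C\<close>, so the three-term sums \<open>A + B - C\<close>,
  \<open>2A - C - cnj C\<close> and \<open>2B - C + cnj C\<close> vanish. In each of them the \<open>q\<close>-adic valuations of the
  terms are congruent modulo \<open>l\<close> to the three valuations of hypothesis (i), (ii) resp. (iii),
  which are pairwise incongruent; but in a vanishing sum of three nonzero terms two of the
  valuations agree, by the ultrametric inequality.

  The powers \<open>q\<^sup>k\<close> are described through the
  inverse ideal \<open>q\<^sup>-\<^sup>1 = {d \<in> K. d q \<subseteq> O}\<close>: the identity \<open>q q\<^sup>-\<^sup>1 = O\<close>, established with explicit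
  elements built from the rational prime \<open>p\<close> below \<open>q\<close>, yields
  \<open>x \<in> q\<^sup>k\<^sup>+\<^sup>1 \<longleftrightarrow> x q\<^sup>-\<^sup>1 \<subseteq> q\<^sup>k\<close>. From this, additivity of \<open>ord\<^sub>q\<close> follows from the primality of \<open>q\<close>,
  and its finiteness from the fact that an element of \<open>K\<close> whose powers have a common
  denominator is integral.\<close>

section \<open>Arithmetic in \<open>K\<close>\<close>

lemma of_rat_complex: "(of_rat r :: complex) = complex_of_real (of_rat r)"
  by (cases r) (simp add: of_rat_rat)

lemma cnj_of_rat [simp]: "cnj (of_rat r) = of_rat r"
  by (simp add: of_rat_complex)

lemma sqrt_neg_mult_self: "sqrt_neg m * sqrt_neg m = - of_nat m"
proof -
  have "complex_of_real (sqrt (real m)) * complex_of_real (sqrt (real m)) = of_nat m"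
    by (simp flip: of_real_mult)
  then show ?thesis
    by (simp add: sqrt_neg_def algebra_simps)
qed

lemma cnj_sqrt_neg [simp]: "cnj (sqrt_neg m) = - sqrt_neg m"
  by (simp add: sqrt_neg_def)

lemma sqrt_neg_eq_0_iff [simp]: "sqrt_neg m = 0 \<longleftrightarrow> m = 0"
  by (simp add: sqrt_neg_def)

definition traceK :: "complex \<Rightarrow> complex" where
  "traceK x = x + cnj x"

lemma QF_iff: "z \<in> QF m \<longleftrightarrow> (\<exists>a b. z = of_rat a + of_rat b * sqrt_neg m)"
  by (auto simp: QF_def)

lemma Rats_subset_QF: "\<rat> \<subseteq> QF m"
proof
  fix x :: complex assume "x \<in> \<rat>"
  then obtain r where "x = of_rat r" by (rule Rats_cases)
  then show "x \<in> QF m" unfolding QF_iff by (intro exI[of _ r] exI[of _ 0]) simp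
qed

lemma QF_of_int [simp]: "of_int a \<in> QF m"
  using Rats_subset_QF Rats_of_int by blast

lemma QF_of_nat [simp]: "of_nat a \<in> QF m"
  using QF_of_int[of "int a"] by simp

lemma QF_sqrt_neg [simp]: "sqrt_neg m \<in> QF m"
  unfolding QF_iff by (rule exI[of _ 0], rule exI[of _ 1]) simp

lemma QF_add [intro]: "x \<in> QF m \<Longrightarrow> y \<in> QF m \<Longrightarrow> x + y \<in> QF m"
proof -
  assume "x \<in> QF m" "y \<in> QF m"
  then obtain a b c d where xy: "x = of_rat a + of_rat b * sqrt_neg m" "y = of_rat c + of_rat d * sqrt_neg m"
    unfolding QF_iff by blast
  have "x + y = of_rat (a + c) + of_rat (b + d) * sqrt_neg m"
    unfolding xy by (simp add: of_rat_add algebra_simps)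
  then show ?thesis unfolding QF_iff by blast
qed

lemma QF_mult [intro]: "x \<in> QF m \<Longrightarrow> y \<in> QF m \<Longrightarrow> x * y \<in> QF m"
proof -
  assume "x \<in> QF m" "y \<in> QF m"
  then obtain a b c d where xy: "x = of_rat a + of_rat b * sqrt_neg m" "y = of_rat c + of_rat d * sqrt_neg m"
    unfolding QF_iff by blast
  have "x * y = of_rat a * of_rat c + of_rat b * of_rat d * (sqrt_neg m * sqrt_neg m)
      + (of_rat a * of_rat d + of_rat b * of_rat c) * sqrt_neg m"
    unfolding xy by (simp add: algebra_simps)
  also have "\<dots> = of_rat (a * c - of_nat m * b * d) + of_rat (a * d + b * c) * sqrt_neg m"
    by (simp add: sqrt_neg_mult_self of_rat_add of_rat_mult of_rat_diff)
  finally show ?thesis unfolding QF_iff by blast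
qed

lemma QF_uminus [intro]: "x \<in> QF m \<Longrightarrow> - x \<in> QF m"
  using QF_mult[OF QF_of_int[of "- 1"]] by simp

lemma QF_cnj [intro]: "x \<in> QF m \<Longrightarrow> cnj x \<in> QF m"
proof -
  assume "x \<in> QF m"
  then obtain a b where x: "x = of_rat a + of_rat b * sqrt_neg m" unfolding QF_iff by blast
  have "cnj x = of_rat a + of_rat (- b) * sqrt_neg m" unfolding x by (simp add: of_rat_minus)
  then show ?thesis unfolding QF_iff by blast
qed

lemma QF_power [intro]: "x \<in> QF m \<Longrightarrow> x ^ k \<in> QF m"
  by (induct k) (use QF_of_nat[of 1] in auto)

lemma QF_cnj_fixed_Rats: "x \<in> QF m \<Longrightarrow> cnj x = x \<Longrightarrow> x \<in> \<rat>"
proof -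
  assume "x \<in> QF m" and fixed: "cnj x = x"
  then obtain a b where x: "x = of_rat a + of_rat b * sqrt_neg m" unfolding QF_iff by blast
  from fixed have "of_rat b * sqrt_neg m = 0" unfolding x by (simp, blast)
  then have "x = of_rat a" unfolding x by simp
  then show ?thesis by simp
qed

lemma traceK_Rats: "x \<in> QF m \<Longrightarrow> traceK x \<in> \<rat>"
  by (rule QF_cnj_fixed_Rats[of _ m]) (auto simp: traceK_def)

lemma normK_Rats: "x \<in> QF m \<Longrightarrow> normK x \<in> \<rat>"
  by (rule QF_cnj_fixed_Rats[of _ m]) (auto simp: normK_def)

lemma QF_inverse [intro]: "x \<in> QF m \<Longrightarrow> inverse x \<in> QF m"
proof (cases "x = 0")
  case False
  assume x: "x \<in> QF m"
  have "inverse x = inverse (normK x) * cnj x"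
    using False by (simp add: normK_def field_simps)
  moreover have "inverse (normK x) \<in> QF m"
    using normK_Rats[OF x] Rats_subset_QF Rats_inverse by blast
  ultimately show ?thesis using x by auto
qed simp

lemma QF_divide [intro]: "x \<in> QF m \<Longrightarrow> y \<in> QF m \<Longrightarrow> x / y \<in> QF m"
  by (simp add: divide_inverse QF_mult QF_inverse)

section \<open>Integers and rationals\<close>

lemma prime_not_dvd_Bezout:
  assumes "prime (p :: nat)" "\<not> int p dvd c"
  obtains a b where "a * int p + b * c = 1"
proof -
  have "coprime (int p) c"
    using assms by (simp add: prime_imp_coprime prime_nat_int_transfer)
  then show ?thesis
    using that bezout_int[of "int p" c] by (auto simp: coprime_iff_gcd_eq_1)
qed

lemma cong_sym_trans: "[u = a] (mod n) \<Longrightarrow> [u = b] (mod n) \<Longrightarrow> [a = b] (mod n)"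
  for u a b n :: int
  unfolding cong_def by simp

lemma coprime_diff_mult_left: "coprime (a - k * b) b \<longleftrightarrow> coprime (a::int) b"
proof -
  have "gcd (a - k * b) b = gcd a b"
    using gcd_add_mult[of b "- k" a] by (simp add: gcd.commute algebra_simps)
  then show ?thesis by (simp add: coprime_iff_gcd_eq_1)
qed

lemma abs_le_1_if_powers_dvd:
  fixes w C :: int
  assumes "C \<noteq> 0" and "\<And>j. w ^ j dvd C"
  shows "\<bar>w\<bar> \<le> 1"
proof (rule ccontr)
  assume "\<not> \<bar>w\<bar> \<le> 1"
  then have "(2::int) ^ nat \<bar>C\<bar> \<le> \<bar>w\<bar> ^ nat \<bar>C\<bar>"
    by (intro power_mono) auto
  also have "\<dots> \<le> \<bar>C\<bar>"
    using dvd_imp_le_int[OF assms] by (simp add: power_abs)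
  also have "\<dots> < 2 ^ nat \<bar>C\<bar>"
  proof -
    have "int (nat \<bar>C\<bar>) < int (2 ^ nat \<bar>C\<bar>)"
      using less_exp by (simp only: of_nat_less_iff)
    then show ?thesis by simp
  qed
  finally show False by simp
qed

lemma denominator_dvd_if_mult_Ints:
  fixes a b C :: int
  assumes "(of_int C * (of_int a / of_int b) :: 'a :: field_char_0) \<in> \<int>" "coprime a b" "b \<noteq> 0"
  shows "b dvd C"
proof -
  obtain z where "of_int C * (of_int a / of_int b) = (of_int z :: 'a)"
    using assms(1) by (auto elim: Ints_cases)
  then have "(of_int (C * a) :: 'a) = of_int (z * b)"
    using assms(3) by (simp add: field_simps)
  then have "b dvd C * a"
    by (metis dvd_triv_right of_int_eq_iff)
  then show ?thesis
    using assms(2) by (simp add: coprime_commute coprime_dvd_mult_left_iff)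
qed

lemma Ints_if_bounded_power_denominators:
  fixes x :: "'a :: field_char_0"
  assumes "x \<in> \<rat>" "C \<noteq> 0" "\<And>j. of_int C * x ^ j \<in> \<int>"
  shows "x \<in> \<int>"
proof -
  obtain a b where ab: "b > 0" "coprime a b" "x = of_int a / of_int b"
    using Rats_cases'[OF assms(1)] by blast
  have "b ^ j dvd C" for j
  proof (rule denominator_dvd_if_mult_Ints)
    show "of_int C * (of_int (a ^ j) / of_int (b ^ j)) \<in> (\<int> :: 'a set)"
      using assms(3)[of j] ab(3) by (simp add: power_divide)
  qed (use ab in auto)
  then have "b = 1"
    using abs_le_1_if_powers_dvd[OF assms(2)] ab(1) by force
  then show ?thesis
    using ab(3) by simp
qed

lemma normK_power: "normK (y ^ k) = normK y ^ k"
  unfolding normK_def by (simp add: power_mult_distrib)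

text \<open>Squaring by \<open>tr(y\<^sup>2) = tr(y)\<^sup>2 - 2 N(y)\<close> squares the denominator of the trace and keeps
  the numerator coprime to it.\<close>
lemma traceK_power_2_fraction:
  fixes a b N :: int
  assumes "traceK d = of_int a / of_int b" "coprime a b" "b \<noteq> 0" "normK d = of_int N"
  shows "\<exists>U. traceK (d ^ 2 ^ j) = of_int U / of_int (b ^ 2 ^ j) \<and> coprime U b"
proof (induct j)
  case 0
  then show ?case using assms by auto
next
  case (Suc j)
  then obtain U where U: "traceK (d ^ 2 ^ j) = of_int U / of_int (b ^ 2 ^ j)" "coprime U b"
    by blast
  define W where "W = b ^ 2 ^ j"
  have W: "W \<noteq> 0" "b dvd W"
    using assms(3) by (simp_all add: W_def)
  have sq: "d ^ 2 ^ Suc j = d ^ 2 ^ j * d ^ 2 ^ j" "b ^ 2 ^ Suc j = W * W"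
    by (simp_all add: W_def mult_2 flip: power_add)
  have "traceK (y * y) = traceK y * traceK y - 2 * normK y" for y
    unfolding traceK_def normK_def by (simp add: algebra_simps)
  then have "traceK (d ^ 2 ^ Suc j) = traceK (d ^ 2 ^ j) * traceK (d ^ 2 ^ j) - 2 * normK d ^ 2 ^ j"
    by (metis sq(1) normK_power)
  also have "\<dots> = of_int (U * U - 2 * N ^ 2 ^ j * (W * W)) / of_int (W * W)"
    using W(1) by (simp add: U(1) W_def[symmetric] assms(4) field_simps)
  finally have "traceK (d ^ 2 ^ Suc j) = of_int (U * U - 2 * N ^ 2 ^ j * (W * W)) / of_int (b ^ 2 ^ Suc j)"
    unfolding sq(2) .
  moreover obtain W' where "W = b * W'"
    using W(2) by blast
  then have "coprime (U * U - 2 * N ^ 2 ^ j * (W * W)) b"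
    using U(2) coprime_diff_mult_left[of "U * U" "2 * N ^ 2 ^ j * W * W'" b]
    by (simp add: algebra_simps)
  ultimately show ?case
    by blast
qed

lemma traceK_Ints_if_bounded_power_denominators:
  assumes "traceK d \<in> \<rat>" "normK d \<in> \<int>" "C \<noteq> 0" "\<And>k. of_int C * traceK (d ^ k) \<in> \<int>"
  shows "traceK d \<in> \<int>"
proof -
  obtain N where N: "normK d = of_int N"
    using assms(2) by (auto elim: Ints_cases)
  obtain a b where ab: "b > 0" "coprime a b" "traceK d = of_int a / of_int b"
    using Rats_cases'[OF assms(1)] by blast
  have "b ^ j dvd C" for j
  proof -
    obtain U where U: "traceK (d ^ 2 ^ j) = of_int U / of_int (b ^ 2 ^ j)" "coprime U b"
      using traceK_power_2_fraction[OF ab(3,2) _ N] ab(1) by blast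
    then have "of_int C * (of_int U / of_int (b ^ 2 ^ j)) \<in> (\<int> :: complex set)"
      using assms(4) by metis
    then have "b ^ 2 ^ j dvd C"
      by (rule denominator_dvd_if_mult_Ints) (use U(2) ab(1) in simp_all)
    moreover have "b ^ j dvd b ^ 2 ^ j"
      by (rule le_imp_power_dvd) (simp add: less_exp less_imp_le)
    ultimately show ?thesis
      by (rule dvd_trans[rotated])
  qed
  then have "b = 1"
    using abs_le_1_if_powers_dvd[OF assms(3)] ab(1) by force
  then show ?thesis
    using ab(3) by simp
qed

section \<open>The ring of integers\<close>

lemma OK_intro:
  assumes "x \<in> QF m" "traceK x \<in> \<int>" "normK x \<in> \<int>"
  shows "x \<in> OK m"
proof -
  define p where "p = [: normK x, - traceK x, 1 :]"
  have "\<forall>i. coeff p i \<in> \<int>"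
    using assms(2,3) by (auto simp: p_def coeff_pCons split: nat.split)
  moreover have "poly p x = 0"
    unfolding p_def traceK_def normK_def by (simp add: algebra_simps)
  moreover have "lead_coeff p = 1"
    by (simp add: p_def)
  ultimately show ?thesis
    using assms(1) algebraic_int.intros[of p x] by (simp add: OK_def)
qed

lemma div_OK_if_dvd_traceK_normK:
  assumes "x \<in> QF m" "p > 0" "traceK x = of_int (int p * t)" "normK x = of_int (int p * (int p * c))"
  shows "x / of_nat p \<in> OK m"
proof (rule OK_intro)
  show "x / of_nat p \<in> QF m"
    using assms(1) by (intro QF_divide QF_of_nat)
  have "traceK (x / of_nat p) = of_int t"
    using assms(2,3) by (simp add: traceK_def flip: add_divide_distrib)
  then show "traceK (x / of_nat p) \<in> \<int>"
    by simp
  have "normK (x / of_nat p) = of_int c"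
    using assms(2,4) by (simp add: normK_def)
  then show "normK (x / of_nat p) \<in> \<int>"
    by simp
qed

lemma OK_ring_simps [simp]:
  "carrier (OK_ring m) = OK m" "monoid.mult (OK_ring m) = (*)" "add (OK_ring m) = (+)"
  "one (OK_ring m) = 1" "zero (OK_ring m) = 0"
  by (simp_all add: OK_ring_def)

lemma OK_QF: "x \<in> OK m \<Longrightarrow> x \<in> QF m"
  by (simp add: OK_def)

lemma OK_of_int [simp]: "of_int a \<in> OK m"
  by (simp add: OK_def)

lemma OK_of_nat [simp]: "of_nat a \<in> OK m"
  by (simp add: OK_def)

lemma OK_0 [simp]: "0 \<in> OK m"
  using OK_of_nat[of 0 m] by simp

lemma OK_1 [simp]: "1 \<in> OK m"
  using OK_of_nat[of 1 m] by simp

lemma OK_cnj: "x \<in> OK m \<Longrightarrow> cnj x \<in> OK m"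
  by (auto simp: OK_def)

lemma QF_eq_OK_div_nat:
  assumes "x \<in> QF m"
  obtains a D where "a \<in> OK m" "D > 0" "x = a / of_nat D"
proof -
  obtain r s where x: "x = of_rat r + of_rat s * sqrt_neg m"
    using assms unfolding QF_iff by blast
  obtain u1 w1 where r: "w1 > 0" "of_rat r = (of_int u1 / of_int w1 :: complex)"
    using Rats_cases'[OF Rats_of_rat[of r]] by (metis of_int_0_less_iff)
  obtain u2 w2 where s: "w2 > 0" "of_rat s = (of_int u2 / of_int w2 :: complex)"
    using Rats_cases'[OF Rats_of_rat[of s]] by (metis of_int_0_less_iff)
  define a where "a = of_int (u1 * w2) + of_int (u2 * w1) * sqrt_neg m"
  have "normK a = of_int (u1 * w2) ^ 2 - of_int (u2 * w1) ^ 2 * (sqrt_neg m * sqrt_neg m)"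
    by (simp add: a_def normK_def power2_eq_square algebra_simps)
  also have "\<dots> = of_int ((u1 * w2)\<^sup>2 + int m * (u2 * w1)\<^sup>2)"
    by (simp add: sqrt_neg_mult_self)
  finally have "normK a \<in> \<int>"
    by simp
  moreover have "traceK a = of_int (2 * u1 * w2)"
    by (simp add: a_def traceK_def)
  moreover have "a \<in> QF m"
    unfolding a_def by (intro QF_add QF_mult QF_of_int QF_sqrt_neg)
  ultimately have "a \<in> OK m"
    by (intro OK_intro) auto
  moreover have "x = a / of_nat (nat (w1 * w2))"
    using r s by (simp add: x a_def field_simps)
  ultimately show ?thesis
    using that[of a "nat (w1 * w2)"] r(1) s(1) by simp
qed

text \<open>The ring axioms of \<open>O\<close> (closure of the algebraic integers in \<open>K\<close> under sums and products)
  are assumed rather than proved; they are part of the hypothesis that \<open>P\<close> is a prime ideal of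
  \<open>OK_ring m\<close>.\<close>
locale ring_of_integers =
  fixes m :: nat
  assumes cring_OK: "cring (OK_ring m)"
begin

lemma ring_OK: "ring (OK_ring m)"
  using cring.axioms(1)[OF cring_OK] .

lemma OK_mult: "x \<in> OK m \<Longrightarrow> y \<in> OK m \<Longrightarrow> x * y \<in> OK m"
  using cring.cring_simprules(5)[OF cring_OK, of x y] by simp

lemma OK_add: "x \<in> OK m \<Longrightarrow> y \<in> OK m \<Longrightarrow> x + y \<in> OK m"
  using cring.cring_simprules(1)[OF cring_OK, of x y] by simp

lemma OK_uminus: "x \<in> OK m \<Longrightarrow> - x \<in> OK m"
  using OK_mult[OF OK_of_int[of "- 1"]] by simp

lemma traceK_Ints: "x \<in> OK m \<Longrightarrow> traceK x \<in> \<int>"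
proof -
  assume x: "x \<in> OK m"
  have "traceK x \<in> OK m"
    unfolding traceK_def by (rule OK_add[OF x OK_cnj[OF x]])
  then show ?thesis
    using traceK_Rats[OF OK_QF[OF x]] rational_algebraic_int_is_int[of "traceK x"] by (simp add: OK_def)
qed

lemma normK_Ints: "x \<in> OK m \<Longrightarrow> normK x \<in> \<int>"
proof -
  assume x: "x \<in> OK m"
  have "normK x \<in> OK m"
    unfolding normK_def by (rule OK_mult[OF x OK_cnj[OF x]])
  then show ?thesis
    using normK_Rats[OF OK_QF[OF x]] rational_algebraic_int_is_int[of "normK x"] by (simp add: OK_def)
qed

text \<open>The norms \<open>N(d)^k\<close> and traces \<open>tr(d^k)\<close> have denominators dividing \<open>N(x)\<^sup>2\<close>, which for
  rationals forces integrality.\<close>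
lemma OK_if_power_multiples_OK:
  assumes x: "x \<in> OK m" "x \<noteq> 0" and d: "d \<in> QF m" and powers: "\<And>k. d ^ k * x \<in> OK m"
  shows "d \<in> OK m"
proof -
  obtain C where C: "normK x = of_int C"
    using normK_Ints[OF x(1)] by (auto elim: Ints_cases)
  have "C \<noteq> 0"
    using C x(2) by (auto simp: normK_def)
  have dC: "d ^ k * of_int C \<in> OK m" for k
    using OK_mult[OF powers OK_cnj[OF x(1)]] C by (simp add: normK_def mult.assoc)
  have "of_int (C\<^sup>2) * normK d ^ k = normK (d ^ k * of_int C)" for k
    by (simp add: normK_def power_mult_distrib power2_eq_square algebra_simps)
  then have norm_powers: "of_int (C\<^sup>2) * normK d ^ k \<in> \<int>" for k
    using normK_Ints[OF dC] by metis
  have "normK d \<in> \<int>"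
    by (rule Ints_if_bounded_power_denominators[OF normK_Rats[OF d] _ norm_powers]) (use \<open>C \<noteq> 0\<close> in simp)
  moreover have "of_int C * traceK (d ^ k) = traceK (d ^ k * of_int C)" for k
    by (simp add: traceK_def algebra_simps)
  then have "of_int C * traceK (d ^ k) \<in> \<int>" for k
    using traceK_Ints[OF dC] by metis
  then have "traceK d \<in> \<int>"
    using traceK_Ints_if_bounded_power_denominators[OF traceK_Rats[OF d] \<open>normK d \<in> \<int>\<close> \<open>C \<noteq> 0\<close>]
    by blast
  ultimately show ?thesis
    using OK_intro[OF d] by simp
qed

end

section \<open>A nonzero prime ideal and its inverse\<close>

lemma ideal_subset_OK: "ideal I (OK_ring m) \<Longrightarrow> I \<subseteq> OK m"
  using ideal.Icarr by force

lemma ideal_add: "ideal I (OK_ring m) \<Longrightarrow> x \<in> I \<Longrightarrow> y \<in> I \<Longrightarrow> x + y \<in> I"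
  using additive_subgroup.a_closed[OF ideal.axioms(1)] by fastforce

lemma ideal_mult_OK: "ideal I (OK_ring m) \<Longrightarrow> x \<in> I \<Longrightarrow> a \<in> OK m \<Longrightarrow> a * x \<in> I"
  using ideal.I_l_closed by fastforce

lemma ideal_zero: "ideal I (OK_ring m) \<Longrightarrow> 0 \<in> I"
  using additive_subgroup.zero_closed[OF ideal.axioms(1)] by fastforce

lemma ideal_sum_list: "ideal I (OK_ring m) \<Longrightarrow> (\<And>z. z \<in> set zs \<Longrightarrow> z \<in> I) \<Longrightarrow> sum_list zs \<in> I"
  by (induct zs) (auto simp: ideal_add ideal_zero)

locale OK_prime_ideal =
  fixes m :: nat and P :: "complex set"
  assumes prime_ideal: "prime_ideal_OK m P"
begin

lemma primeideal_P: "primeideal P (OK_ring m)"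
  using prime_ideal by (simp add: prime_ideal_OK_def)

lemma ideal_P: "ideal P (OK_ring m)"
  using primeideal.axioms(1)[OF primeideal_P] .

sublocale ring_of_integers m
  by (rule ring_of_integers.intro, rule primeideal.axioms(2)[OF primeideal_P])

lemma P_OK: "x \<in> P \<Longrightarrow> x \<in> OK m"
  using ideal_subset_OK[OF ideal_P] by blast

lemma P_mult: "x \<in> P \<Longrightarrow> a \<in> OK m \<Longrightarrow> a * x \<in> P"
  by (rule ideal_mult_OK[OF ideal_P])

lemma P_add: "x \<in> P \<Longrightarrow> y \<in> P \<Longrightarrow> x + y \<in> P"
  by (rule ideal_add[OF ideal_P])

lemma P_uminus: "x \<in> P \<Longrightarrow> - x \<in> P"
  using P_mult[of x "- 1"] OK_of_int[of "- 1" m] by simp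

lemma P_prime: "a \<in> OK m \<Longrightarrow> b \<in> OK m \<Longrightarrow> a * b \<in> P \<Longrightarrow> a \<in> P \<or> b \<in> P"
  using primeideal.I_prime[OF primeideal_P, of a b] by simp

lemma one_notin_P: "1 \<notin> P"
proof
  assume "1 \<in> P"
  then have "OK m \<subseteq> P"
    using P_mult[of 1] by auto
  then show False
    using primeideal.I_notcarr[OF primeideal_P] ideal_subset_OK[OF ideal_P] by auto
qed

lemma normK_in_P: "x \<in> P \<Longrightarrow> normK x \<in> P"
  unfolding normK_def using P_mult[OF _ OK_cnj[OF P_OK]] by (simp add: mult.commute)

lemma exists_pos_nat_in_P: "\<exists>N::nat. N > 0 \<and> of_nat N \<in> P"
proof -
  obtain x where x: "x \<in> P" "x \<noteq> 0"
    using prime_ideal ideal_zero[OF ideal_P] unfolding prime_ideal_OK_def by auto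
  obtain k where k: "normK x = of_int k"
    using normK_Ints[OF P_OK[OF x(1)]] by (auto elim: Ints_cases)
  have "k \<noteq> 0"
    using x(2) k by (auto simp: normK_def)
  have "of_int \<bar>k\<bar> \<in> P"
    using normK_in_P[OF x(1)] P_uminus k by (cases "k \<ge> 0") auto
  then show ?thesis
    using \<open>k \<noteq> 0\<close> by (intro exI[of _ "nat \<bar>k\<bar>"]) auto
qed

definition residue_char :: nat where
  "residue_char = (LEAST N. N > 0 \<and> of_nat N \<in> P)"

lemma residue_char: "residue_char > 0" "of_nat residue_char \<in> P"
  using LeastI_ex[OF exists_pos_nat_in_P] unfolding residue_char_def by auto

lemma residue_char_le: "0 < N \<Longrightarrow> of_nat N \<in> P \<Longrightarrow> residue_char \<le> N"
  unfolding residue_char_def by (rule Least_le) simp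

lemma of_int_in_P_iff: "of_int z \<in> P \<longleftrightarrow> int residue_char dvd z"
proof
  assume "int residue_char dvd z"
  then show "of_int z \<in> P"
    using P_mult[OF residue_char(2)] by (auto elim!: dvdE simp: mult.commute)
next
  assume z: "of_int z \<in> P"
  define r where "r = z mod int residue_char"
  have "r = z + (- (z div int residue_char)) * int residue_char"
    by (simp add: r_def minus_div_mult_eq_mod[symmetric])
  then have "of_int r = of_int z + of_int (- (z div int residue_char)) * (of_nat residue_char :: complex)"
    by simp
  also have "\<dots> \<in> P"
    by (rule P_add[OF z P_mult[OF residue_char(2) OK_of_int]])
  finally have "of_nat (nat r) \<in> P"
    using residue_char(1) by (simp add: r_def)
  moreover have "0 \<le> r" "r < int residue_char"
    using residue_char(1) by (simp_all add: r_def)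
  ultimately have "r = 0"
    using residue_char_le[of "nat r"] by (cases "r = 0") auto
  then show "int residue_char dvd z"
    by (simp add: r_def dvd_eq_mod_eq_0)
qed

lemma prime_residue_char: "prime residue_char"
  unfolding prime_nat_iff
proof (intro conjI allI impI)
  show "1 < residue_char"
    using residue_char one_notin_P by (cases "residue_char = 1") auto
  fix d assume "d dvd residue_char"
  then obtain e where e: "residue_char = d * e"
    by blast
  have "of_nat d * of_nat e \<in> P"
    using residue_char(2) e by simp
  then have "of_int (int d) \<in> P \<or> of_int (int e) \<in> P"
    using P_prime[of "of_nat d" "of_nat e"] by simp
  then have "residue_char dvd d \<or> residue_char dvd e"
    unfolding of_int_in_P_iff by simp
  then show "d = 1 \<or> d = residue_char"
  proof
    assume "residue_char dvd d"
    then show ?thesis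
      using \<open>d dvd residue_char\<close> by (simp add: dvd_antisym)
  next
    assume "residue_char dvd e"
    then have "e = residue_char"
      using e by (simp add: dvd_antisym)
    then show ?thesis
      using e residue_char(1) by simp
  qed
qed

lemma Ints_in_P_dvd: "z \<in> \<int> \<Longrightarrow> z \<in> P \<Longrightarrow> \<exists>k. z = of_int (int residue_char * k)"
  by (auto elim!: Ints_cases dvdE simp: of_int_in_P_iff)

lemma mult_cnj_div_residue_char_OK:
  assumes x: "x \<in> P" and y: "y \<in> P"
  shows "x * cnj y / of_nat residue_char \<in> OK m"
proof (rule OK_intro)
  have p: "(of_nat residue_char :: complex) \<noteq> 0"
    using residue_char(1) by simp
  show "x * cnj y / of_nat residue_char \<in> QF m"
    using x y by (intro QF_divide QF_mult QF_cnj QF_of_nat OK_QF P_OK)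
  have "traceK (x * cnj y) \<in> P"
    unfolding traceK_def using P_add[OF P_mult[OF x OK_cnj] P_mult[OF y OK_cnj]] P_OK[OF x] P_OK[OF y]
    by (simp add: mult.commute)
  then obtain k where "traceK (x * cnj y) = of_int (int residue_char * k)"
    using Ints_in_P_dvd traceK_Ints[OF OK_mult[OF P_OK[OF x] OK_cnj[OF P_OK[OF y]]]] by blast
  then have "traceK (x * cnj y / of_nat residue_char) = of_int k"
    using p by (simp add: traceK_def flip: add_divide_distrib)
  then show "traceK (x * cnj y / of_nat residue_char) \<in> \<int>"
    by simp
  obtain a where a: "normK x = of_int (int residue_char * a)"
    using Ints_in_P_dvd[OF normK_Ints[OF P_OK[OF x]] normK_in_P[OF x]] by blast
  obtain b where b: "normK y = of_int (int residue_char * b)"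
    using Ints_in_P_dvd[OF normK_Ints[OF P_OK[OF y]] normK_in_P[OF y]] by blast
  have "normK (x * cnj y / of_nat residue_char) = normK x * normK y / (of_nat residue_char)\<^sup>2"
    by (simp add: normK_def power2_eq_square)
  also have "\<dots> = of_int (a * b)"
    using p by (simp add: a b power2_eq_square)
  finally show "normK (x * cnj y / of_nat residue_char) \<in> \<int>"
    by simp
qed

definition P_inv :: "complex set" where
  "P_inv = {d \<in> QF m. \<forall>z\<in>P. d * z \<in> OK m}"

lemma P_inv_mult_P: "d \<in> P_inv \<Longrightarrow> z \<in> P \<Longrightarrow> d * z \<in> OK m"
  by (simp add: P_inv_def)

lemma OK_subset_P_inv: "OK m \<subseteq> P_inv"
  using OK_QF OK_mult P_OK by (auto simp: P_inv_def)

lemma cnj_div_residue_char_in_P_inv: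
  assumes "x \<in> P"
  shows "of_int b * cnj x / of_nat residue_char \<in> P_inv"
  unfolding P_inv_def
proof (intro CollectI conjI ballI)
  show "of_int b * cnj x / of_nat residue_char \<in> QF m"
    using assms by (intro QF_divide QF_mult QF_cnj QF_of_int QF_of_nat OK_QF P_OK)
  fix z assume "z \<in> P"
  then have "of_int b * (z * cnj x / of_nat residue_char) \<in> OK m"
    using OK_mult[OF OK_of_int mult_cnj_div_residue_char_OK[OF _ assms]] by blast
  then show "of_int b * cnj x / of_nat residue_char * z \<in> OK m"
    by (simp add: algebra_simps)
qed

lemma one_eq_sum_P_times_P_inv_of_normK:
  assumes x: "x \<in> P" and c: "normK x = of_int (int residue_char * c)" "\<not> int residue_char dvd c"
  shows "\<exists>ps. (\<Sum>(a, b)\<leftarrow>ps. a * b) = 1 \<and> (\<forall>(a, b)\<in>set ps. a \<in> P \<and> b \<in> P_inv)"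
proof -
  obtain a b where ab: "a * int residue_char + b * c = 1"
    using prime_not_dvd_Bezout[OF prime_residue_char c(2)] by blast
  have "of_nat residue_char * of_int a + x * (of_int b * cnj x / of_nat residue_char)
      = of_int (a * int residue_char + b * c)"
    using residue_char(1) c(1) by (simp add: normK_def field_simps)
  then show ?thesis
    using residue_char(2) x OK_subset_P_inv cnj_div_residue_char_in_P_inv[OF x] ab
    by (intro exI[of _ "[(of_nat residue_char, of_int a), (x, of_int b * cnj x / of_nat residue_char)]"])
      auto
qed

lemma one_eq_sum_P_times_P_inv_of_traceK:
  assumes x: "x \<in> P" and t: "traceK x = of_int t" "\<not> int residue_char dvd t"
  shows "\<exists>ps. (\<Sum>(a, b)\<leftarrow>ps. a * b) = 1 \<and> (\<forall>(a, b)\<in>set ps. a \<in> P \<and> b \<in> P_inv)"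
proof -
  obtain a b where ab: "a * int residue_char + b * t = 1"
    using prime_not_dvd_Bezout[OF prime_residue_char t(2)] by blast
  have "of_nat residue_char * of_int a + x * of_int b
      + of_nat residue_char * (of_int b * cnj x / of_nat residue_char)
      = of_int a * of_nat residue_char + of_int b * traceK x"
    using residue_char(1) by (simp add: traceK_def field_simps)
  also have "\<dots> = of_int (a * int residue_char + b * t)"
    by (simp add: t(1))
  finally show ?thesis
    using residue_char(2) x OK_subset_P_inv cnj_div_residue_char_in_P_inv[OF x] ab
    by (intro exI[of _ "[(of_nat residue_char, of_int a), (x, of_int b),
          (of_nat residue_char, of_int b * cnj x / of_nat residue_char)]"]) (auto simp: add.assoc)
qed

lemma one_eq_sum_P_times_P_inv_if_not_div:
  assumes x: "x \<in> P" "x / of_nat residue_char \<notin> OK m"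
  shows "\<exists>ps. (\<Sum>(a, b)\<leftarrow>ps. a * b) = 1 \<and> (\<forall>(a, b)\<in>set ps. a \<in> P \<and> b \<in> P_inv)"
proof -
  obtain t where t: "traceK x = of_int t"
    using traceK_Ints[OF P_OK[OF x(1)]] by (auto elim: Ints_cases)
  obtain c where c: "normK x = of_int (int residue_char * c)"
    using Ints_in_P_dvd[OF normK_Ints[OF P_OK[OF x(1)]] normK_in_P[OF x(1)]] by blast
  show ?thesis
  proof (cases "int residue_char dvd c \<and> int residue_char dvd t")
    case True
    then obtain c' t' where "c = int residue_char * c'" "t = int residue_char * t'"
      by blast
    then have "x / of_nat residue_char \<in> OK m"
      using div_OK_if_dvd_traceK_normK[OF OK_QF[OF P_OK[OF x(1)]] residue_char(1), where t = t' and c = c']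
        t c by simp
    then show ?thesis
      using x(2) by simp
  next
    case False
    then show ?thesis
      using one_eq_sum_P_times_P_inv_of_normK[OF x(1) c] one_eq_sum_P_times_P_inv_of_traceK[OF x(1) t]
      by blast
  qed
qed

text \<open>The identity \<open>P P\<^sup>-\<^sup>1 = O\<close> with explicit elements: the inverse elements are \<open>1/p\<close> or
  integer multiples of \<open>cnj x / p\<close>, where \<open>p\<close> is the rational prime below \<open>P\<close>.\<close>
lemma one_eq_sum_P_times_P_inv:
  "\<exists>ps. (\<Sum>(a, b)\<leftarrow>ps. a * b) = 1 \<and> (\<forall>(a, b)\<in>set ps. a \<in> P \<and> b \<in> P_inv)"
proof (cases "\<forall>x\<in>P. x / of_nat residue_char \<in> OK m")
  case True
  moreover have "1 / of_nat residue_char \<in> QF m"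
    using QF_divide[OF QF_of_nat[of 1] QF_of_nat] by simp
  ultimately have "1 / of_nat residue_char \<in> P_inv"
    by (simp add: P_inv_def)
  then show ?thesis
    using residue_char by (intro exI[of _ "[(of_nat residue_char, 1 / of_nat residue_char)]"]) simp
next
  case False
  then show ?thesis
    using one_eq_sum_P_times_P_inv_if_not_div by blast
qed

section \<open>Powers of a prime ideal\<close>

lemma ideal_pow_0 [simp]: "ideal_pow m P 0 = OK m"
  by (simp add: ideal_pow_def)

lemma ideal_pow_Suc: "ideal_pow m P (Suc k) = ideal_prod (OK_ring m) (ideal_pow m P k) P"
  by (simp add: ideal_pow_def)

lemma ideal_ideal_pow: "ideal (ideal_pow m P k) (OK_ring m)"
proof (induct k)
  case 0
  then show ?case
    using ring.oneideal[OF ring_OK] by simp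
next
  case (Suc k)
  then show ?case
    unfolding ideal_pow_Suc by (rule ring.ideal_prod_is_ideal[OF ring_OK _ ideal_P])
qed

lemma ideal_pow_subset_OK: "ideal_pow m P k \<subseteq> OK m"
  by (rule ideal_subset_OK[OF ideal_ideal_pow])

lemma ideal_pow_1: "ideal_pow m P 1 = P"
proof
  show "ideal_pow m P 1 \<subseteq> P"
    using ring.ideal_prod_inter[OF ring_OK ring.oneideal[OF ring_OK] ideal_P]
    by (simp add: ideal_pow_Suc)
  show "P \<subseteq> ideal_pow m P 1"
  proof
    fix x assume "x \<in> P"
    then have "1 \<otimes>\<^bsub>OK_ring m\<^esub> x \<in> ideal_prod (OK_ring m) (OK m) P"
      by (intro ideal_prod.prod) auto
    then show "x \<in> ideal_pow m P 1"
      by (simp add: ideal_pow_Suc)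
  qed
qed

lemma ideal_pow_Suc_iff:
  "x \<in> ideal_pow m P (Suc k) \<longleftrightarrow> x \<in> OK m \<and> (\<forall>d\<in>P_inv. d * x \<in> ideal_pow m P k)"
proof
  assume x: "x \<in> ideal_pow m P (Suc k)"
  have "d * x \<in> ideal_pow m P k" if "d \<in> P_inv" for d
    using x unfolding ideal_pow_Suc
  proof (induct x rule: ideal_prod.induct)
    case (prod i j)
    then have "(d * j) * i \<in> ideal_pow m P k"
      using ideal_mult_OK[OF ideal_ideal_pow] P_inv_mult_P[OF that] by blast
    then show ?case
      by (simp add: algebra_simps)
  next
    case (sum s1 s2)
    then show ?case
      using ideal_add[OF ideal_ideal_pow] by (simp add: distrib_left)
  qed
  then show "x \<in> OK m \<and> (\<forall>d\<in>P_inv. d * x \<in> ideal_pow m P k)"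
    using x ideal_pow_subset_OK by blast
next
  assume x: "x \<in> OK m \<and> (\<forall>d\<in>P_inv. d * x \<in> ideal_pow m P k)"
  obtain ps where ps: "(\<Sum>(a, b)\<leftarrow>ps. a * b) = 1" "\<forall>(a, b)\<in>set ps. a \<in> P \<and> b \<in> P_inv"
    using one_eq_sum_P_times_P_inv by blast
  have "(\<Sum>(a, b)\<leftarrow>ps. (b * x) \<otimes>\<^bsub>OK_ring m\<^esub> a) = (\<Sum>(a, b)\<leftarrow>ps. a * b) * x"
    by (induct ps) (auto simp: algebra_simps)
  then have "x = (\<Sum>(a, b)\<leftarrow>ps. (b * x) \<otimes>\<^bsub>OK_ring m\<^esub> a)"
    by (simp add: ps(1))
  also have "\<dots> \<in> ideal_prod (OK_ring m) (ideal_pow m P k) P"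
  proof (rule ideal_sum_list[OF ring.ideal_prod_is_ideal[OF ring_OK ideal_ideal_pow ideal_P]])
    fix z assume "z \<in> set (map (\<lambda>(a, b). (b * x) \<otimes>\<^bsub>OK_ring m\<^esub> a) ps)"
    then obtain a b where ab: "(a, b) \<in> set ps" "z = (b * x) \<otimes>\<^bsub>OK_ring m\<^esub> a"
      by auto
    show "z \<in> ideal_prod (OK_ring m) (ideal_pow m P k) P"
      unfolding ab(2) using x ps(2) ab(1) by (intro ideal_prod.prod) auto
  qed
  finally show "x \<in> ideal_pow m P (Suc k)"
    by (simp add: ideal_pow_Suc)
qed

lemma ideal_pow_Suc_subset: "ideal_pow m P (Suc k) \<subseteq> ideal_pow m P k"
proof (induct k)
  case 0
  then show ?case
    using ideal_pow_subset_OK by simp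
next
  case (Suc k)
  show ?case
  proof
    fix x assume "x \<in> ideal_pow m P (Suc (Suc k))"
    then show "x \<in> ideal_pow m P (Suc k)"
      using Suc unfolding ideal_pow_Suc_iff[of x "Suc k"] ideal_pow_Suc_iff[of x k] by blast
  qed
qed

lemma ideal_pow_antimono: "j \<le> k \<Longrightarrow> ideal_pow m P k \<subseteq> ideal_pow m P j"
  by (rule lift_Suc_antimono_le[of "ideal_pow m P"]) (use ideal_pow_Suc_subset in auto)

lemma ideal_pow_mult: "x \<in> ideal_pow m P i \<Longrightarrow> y \<in> ideal_pow m P j \<Longrightarrow> x * y \<in> ideal_pow m P (i + j)"
proof (induct j arbitrary: y)
  case 0
  then show ?case
    using ideal_mult_OK[OF ideal_ideal_pow] by (simp add: mult.commute)
next
  case (Suc j)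
  have y: "y \<in> OK m" "\<forall>d\<in>P_inv. d * y \<in> ideal_pow m P j"
    using Suc.prems(2) unfolding ideal_pow_Suc_iff by simp_all
  have "x * y \<in> OK m"
    using OK_mult Suc.prems(1) y(1) ideal_pow_subset_OK by blast
  moreover have "d * (x * y) \<in> ideal_pow m P (i + j)" if "d \<in> P_inv" for d
  proof -
    have "x * (d * y) \<in> ideal_pow m P (i + j)"
      using Suc.hyps[OF Suc.prems(1)] y(2) that by blast
    then show ?thesis
      by (simp add: ac_simps)
  qed
  ultimately show ?case
    by (simp add: ideal_pow_Suc_iff)
qed

lemma P_inv_power_mult: "d \<in> P_inv \<Longrightarrow> x \<in> ideal_pow m P (j + k) \<Longrightarrow> d ^ j * x \<in> ideal_pow m P k"
proof (induct j arbitrary: x)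
  case (Suc j)
  then have "d ^ j * (d * x) \<in> ideal_pow m P k"
    by (simp add: ideal_pow_Suc_iff)
  then show ?case
    by (simp add: ac_simps)
qed simp

lemma exists_not_in_ideal_pow:
  assumes x: "x \<in> OK m" "x \<noteq> 0"
  obtains k where "x \<notin> ideal_pow m P k"
proof (rule ccontr)
  assume "\<not> thesis"
  then have all: "x \<in> ideal_pow m P k" for k
    using that by blast
  obtain ps where ps: "(\<Sum>(a, b)\<leftarrow>ps. a * b) = 1" "\<forall>(a, b)\<in>set ps. a \<in> P \<and> b \<in> P_inv"
    using one_eq_sum_P_times_P_inv by blast
  have "b \<in> OK m" if "b \<in> P_inv" for b
    using OK_if_power_multiples_OK[OF x] that P_inv_power_mult[OF that all[of "_ + 0"]]
    by (simp add: P_inv_def)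
  then have "a * b \<in> P" if "(a, b) \<in> set ps" for a b
    using ps(2) that P_mult[of a b] by (auto simp: mult.commute)
  then have "(\<Sum>(a, b)\<leftarrow>ps. a * b) \<in> P"
    by (intro ideal_sum_list[OF ideal_P]) auto
  then show False
    using ps(1) one_notin_P by simp
qed

text \<open>Dividing out one factor of \<open>P\<close> at a time reduces \<open>exact_pow_mult\<close> below to the
  primality of \<open>P\<close>.\<close>
lemma exact_pow_mult_step:
  assumes x: "x \<in> ideal_pow m P (Suc i)" "x \<notin> ideal_pow m P (Suc (Suc i))"
    and IH: "\<And>x'. x' \<in> ideal_pow m P i \<Longrightarrow> x' \<notin> ideal_pow m P (Suc i) \<Longrightarrow>
      x' * y \<notin> ideal_pow m P (Suc (i + j))"
  shows "x * y \<notin> ideal_pow m P (Suc (Suc i + j))"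
proof
  obtain d where d: "d \<in> P_inv" "d * x \<notin> ideal_pow m P (Suc i)"
    using x ideal_pow_subset_OK ideal_pow_Suc_iff[of x "Suc i"] by blast
  have "d * x \<in> ideal_pow m P i"
    using x(1) d(1) by (simp add: ideal_pow_Suc_iff)
  then have "(d * x) * y \<notin> ideal_pow m P (Suc (i + j))"
    using IH d(2) by blast
  moreover assume "x * y \<in> ideal_pow m P (Suc (Suc i + j))"
  then have "d * (x * y) \<in> ideal_pow m P (Suc (i + j))"
    using d(1) by (simp add: ideal_pow_Suc_iff)
  ultimately show False
    by (simp add: mult.assoc)
qed

lemma exact_pow_mult:
  assumes "x \<in> ideal_pow m P i" "x \<notin> ideal_pow m P (Suc i)"
    and "y \<in> ideal_pow m P j" "y \<notin> ideal_pow m P (Suc j)"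
  shows "x * y \<notin> ideal_pow m P (Suc (i + j))"
  using assms
proof (induct i arbitrary: x)
  case 0
  from 0(3,4) show ?case
  proof (induct j arbitrary: y)
    case 0
    then show ?case
      using \<open>x \<notin> ideal_pow m P (Suc 0)\<close> \<open>x \<in> ideal_pow m P 0\<close> P_prime ideal_pow_1 by auto
  next
    case (Suc j)
    then show ?case
      using exact_pow_mult_step[of y j x 0] by (simp add: mult.commute)
  qed
next
  case (Suc i)
  then show ?case
    using exact_pow_mult_step[of x i y j] by simp
qed

lemma in_ideal_pow_iff_le_ordO:
  assumes x: "x \<in> OK m" "x \<noteq> 0"
  shows "x \<in> ideal_pow m P k \<longleftrightarrow> k \<le> ordO m P x"
proof -
  obtain K where K: "x \<notin> ideal_pow m P K"
    using exists_not_in_ideal_pow[OF x] .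
  have bound: "k' \<le> K" if "x \<in> ideal_pow m P k'" for k'
    using that K ideal_pow_antimono[of K k'] by (cases "K \<le> k'") auto
  have "x \<in> ideal_pow m P (ordO m P x)"
    unfolding ordO_def using GreatestI_nat[of "\<lambda>k. x \<in> ideal_pow m P k" 0 K] x bound by simp
  moreover have "k \<le> ordO m P x" if "x \<in> ideal_pow m P k"
    unfolding ordO_def using Greatest_le_nat[of "\<lambda>k. x \<in> ideal_pow m P k" k K] bound that by blast
  ultimately show ?thesis
    using ideal_pow_antimono by blast
qed

lemma ordO_mult:
  assumes x: "x \<in> OK m" "x \<noteq> 0" and y: "y \<in> OK m" "y \<noteq> 0"
  shows "ordO m P (x * y) = ordO m P x + ordO m P y"
proof -
  have xy: "x * y \<in> OK m" "x * y \<noteq> 0"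
    using x y OK_mult by auto
  have "x * y \<in> ideal_pow m P (ordO m P x + ordO m P y)"
    using ideal_pow_mult in_ideal_pow_iff_le_ordO[OF x] in_ideal_pow_iff_le_ordO[OF y] by blast
  moreover have "x * y \<notin> ideal_pow m P (Suc (ordO m P x + ordO m P y))"
    using exact_pow_mult in_ideal_pow_iff_le_ordO[OF x] in_ideal_pow_iff_le_ordO[OF y] by simp
  ultimately show ?thesis
    unfolding in_ideal_pow_iff_le_ordO[OF xy] by simp
qed

lemma ordO_eq_0: "x \<in> OK m \<Longrightarrow> x \<noteq> 0 \<Longrightarrow> x \<notin> P \<Longrightarrow> ordO m P x = 0"
  using in_ideal_pow_iff_le_ordO[of x 1] ideal_pow_1 by simp

section \<open>The valuation on \<open>K\<close>\<close>

text \<open>This shows that the choice in the definition of \<open>ordK\<close> does not matter.\<close>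
lemma ordK_div:
  assumes a: "a \<in> OK m" "a \<noteq> 0" and b: "b \<in> OK m" "b \<noteq> 0"
  shows "ordK m P (a / b) = int (ordO m P a) - int (ordO m P b)"
proof -
  have "\<exists>k a' b'. a' \<in> OK m \<and> b' \<in> OK m \<and> a' \<noteq> 0 \<and> b' \<noteq> 0 \<and> a / b = a' / b'
      \<and> k = int (ordO m P a') - int (ordO m P b')"
    using a b by blast
  from someI_ex[OF this] obtain a' b' where ab: "a' \<in> OK m" "b' \<in> OK m" "a' \<noteq> 0" "b' \<noteq> 0"
      "a / b = a' / b'" "ordK m P (a / b) = int (ordO m P a') - int (ordO m P b')"
    unfolding ordK_def by blast
  have "a * b' = a' * b"
    using ab(4,5) b(2) by (simp add: field_simps)
  then have "ordO m P a + ordO m P b' = ordO m P a' + ordO m P b"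
    using ordO_mult[OF a ab(2,4)] ordO_mult[OF ab(1,3) b] by simp
  then show ?thesis
    using ab(6) by simp
qed

lemma ordK_mult:
  assumes x: "x \<in> QF m" "x \<noteq> 0" and y: "y \<in> QF m" "y \<noteq> 0"
  shows "ordK m P (x * y) = ordK m P x + ordK m P y"
proof -
  obtain a D where a: "a \<in> OK m" "D > 0" "x = a / of_nat D"
    using QF_eq_OK_div_nat[OF x(1)] .
  obtain b E where b: "b \<in> OK m" "E > 0" "y = b / of_nat E"
    using QF_eq_OK_div_nat[OF y(1)] .
  have nz: "a \<noteq> 0" "b \<noteq> 0"
    using a(3) b(3) x(2) y(2) by auto
  have "x * y = (a * b) / (of_nat D * of_nat E)"
    using a(3) b(3) by simp
  then have "ordK m P (x * y) = int (ordO m P (a * b)) - int (ordO m P (of_nat D * of_nat E))"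
    using ordK_div[of "a * b" "of_nat D * of_nat E"] OK_mult[OF a(1) b(1)] OK_mult[OF OK_of_nat OK_of_nat]
      nz a(2) b(2) by simp
  also have "\<dots> = (int (ordO m P a) - int (ordO m P (of_nat D)))
      + (int (ordO m P b) - int (ordO m P (of_nat E)))"
    using ordO_mult[OF a(1) nz(1) b(1) nz(2)] ordO_mult[of "of_nat D" "of_nat E"] a(2) b(2) by simp
  also have "\<dots> = ordK m P x + ordK m P y"
    using ordK_div[OF a(1) nz(1), of "of_nat D"] ordK_div[OF b(1) nz(2), of "of_nat E"] a b by simp
  finally show ?thesis .
qed

lemma ordK_power:
  assumes "x \<in> QF m" "x \<noteq> 0"
  shows "ordK m P (x ^ k) = int k * ordK m P x"
proof (induct k)
  case 0
  then show ?case
    using ordK_div[of 1 1] by simp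
next
  case (Suc k)
  then show ?case
    using ordK_mult[OF assms QF_power[OF assms(1)]] assms(2) by (simp add: algebra_simps)
qed

lemma ordK_uminus:
  assumes "x \<in> QF m" "x \<noteq> 0"
  shows "ordK m P (- x) = ordK m P x"
proof -
  have "- 1 \<notin> P"
    using P_uminus one_notin_P by fastforce
  then have "ordK m P (- 1) = 0"
    using ordK_div[of "- 1" 1] ordO_eq_0[of "- 1"] ordO_eq_0[of 1] one_notin_P OK_uminus by simp
  then show ?thesis
    using ordK_mult[of "- 1" x] assms QF_uminus[OF QF_of_nat[of 1]] by simp
qed

lemma ordK_add_ge_min:
  assumes x: "x \<in> QF m" "x \<noteq> 0" and y: "y \<in> QF m" "y \<noteq> 0" and xy: "x + y \<noteq> 0"
  shows "min (ordK m P x) (ordK m P y) \<le> ordK m P (x + y)"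
proof -
  obtain a D where a: "a \<in> OK m" "D > 0" "x = a / of_nat D"
    using QF_eq_OK_div_nat[OF x(1)] .
  obtain b E where b: "b \<in> OK m" "E > 0" "y = b / of_nat E"
    using QF_eq_OK_div_nat[OF y(1)] .
  define c where "c = (of_nat (D * E) :: complex)"
  define a' where "a' = a * of_nat E"
  define b' where "b' = b * of_nat D"
  have c: "c \<in> OK m" "c \<noteq> 0"
    unfolding c_def using a(2) b(2) by (simp only: OK_of_nat, simp)
  have a': "a' \<in> OK m" "a' \<noteq> 0" "x = a' / c"
    using OK_mult[OF a(1) OK_of_nat] a(2,3) b(2) x(2) by (simp_all add: a'_def c_def)
  have b': "b' \<in> OK m" "b' \<noteq> 0" "y = b' / c"
    using OK_mult[OF b(1) OK_of_nat] a(2) b(2,3) y(2) by (simp_all add: b'_def c_def)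
  have s3: "x + y = (a' + b') / c"
    using a'(3) b'(3) by (simp add: add_divide_distrib)
  have s: "a' + b' \<in> OK m" "a' + b' \<noteq> 0"
    using OK_add[OF a'(1) b'(1)] xy s3 by auto
  define k where "k = min (ordO m P a') (ordO m P b')"
  have "a' + b' \<in> ideal_pow m P k"
    using in_ideal_pow_iff_le_ordO[OF a'(1,2)] in_ideal_pow_iff_le_ordO[OF b'(1,2)]
      ideal_add[OF ideal_ideal_pow] by (simp add: k_def)
  then have "k \<le> ordO m P (a' + b')"
    using in_ideal_pow_iff_le_ordO[OF s(1,2)] by simp
  then show ?thesis
    using ordK_div[OF a'(1,2) c] ordK_div[OF b'(1,2) c] ordK_div[OF s c] a'(3) b'(3) s3
    by (simp add: k_def)
qed

lemma ordK_add_eq_min: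
  assumes x: "x \<in> QF m" "x \<noteq> 0" and y: "y \<in> QF m" "y \<noteq> 0" and xy: "x + y \<noteq> 0"
    and ne: "ordK m P x \<noteq> ordK m P y"
  shows "ordK m P (x + y) = min (ordK m P x) (ordK m P y)"
proof -
  have s: "x + y \<in> QF m"
    using x(1) y(1) by (rule QF_add)
  have "min (ordK m P (x + y)) (ordK m P (- y)) \<le> ordK m P (x + y + - y)"
    using x(2) y(2) xy by (intro ordK_add_ge_min[OF s _ QF_uminus[OF y(1)]]) auto
  then have 1: "min (ordK m P (x + y)) (ordK m P y) \<le> ordK m P x"
    using ordK_uminus[OF y] by simp
  have "min (ordK m P (x + y)) (ordK m P (- x)) \<le> ordK m P (x + y + - x)"
    using x(2) y(2) xy by (intro ordK_add_ge_min[OF s _ QF_uminus[OF x(1)]]) auto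
  then have 2: "min (ordK m P (x + y)) (ordK m P x) \<le> ordK m P y"
    using ordK_uminus[OF x] by (simp add: add.commute)
  show ?thesis
    using ordK_add_ge_min[OF x y xy] 1 2 ne by (simp add: min_def split: if_split_asm)
qed

lemma ordK_zero_sum:
  assumes "x \<in> QF m" "x \<noteq> 0" "y \<in> QF m" "y \<noteq> 0" "z \<in> QF m" "z \<noteq> 0" "x + y + z = 0"
  shows "ordK m P x = ordK m P y \<or> ordK m P x = ordK m P z \<or> ordK m P y = ordK m P z"
proof (rule disjCI)
  assume ne: "\<not> (ordK m P x = ordK m P z \<or> ordK m P y = ordK m P z)"
  have sum: "x + y = - z"
    using assms(7) by (simp add: eq_neg_iff_add_eq_0)
  show "ordK m P x = ordK m P y"
  proof (rule ccontr)
    assume "ordK m P x \<noteq> ordK m P y"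
    moreover have "x + y \<noteq> 0"
      using sum assms(6) by simp
    ultimately have "ordK m P (x + y) = min (ordK m P x) (ordK m P y)"
      using ordK_add_eq_min assms(1-4) by blast
    moreover have "ordK m P (x + y) = ordK m P z"
      using sum ordK_uminus[OF assms(5,6)] by simp
    ultimately show False
      using ne by (simp add: min_def split: if_split_asm)
  qed
qed

section \<open>Three-term sums\<close>

lemma ordK_mult_power_cong:
  assumes x: "x \<in> QF m" and y: "y \<in> QF m" and nz: "x * y ^ l \<noteq> 0"
  shows "[ordK m P (x * y ^ l) = ordK m P x] (mod int l)"
proof (cases "l = 0")
  case False
  with nz have "x \<noteq> 0" "y \<noteq> 0"
    by auto
  then have "ordK m P (x * y ^ l) = ordK m P x + int l * ordK m P y"
    using ordK_mult[OF x _ QF_power[OF y]] ordK_power[OF y] by simp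
  then show ?thesis
    by (simp add: cong_def)
qed simp

lemma ordK_uminus_mult_power_cong:
  assumes "x \<in> QF m" "y \<in> QF m" "x * y ^ l \<noteq> 0"
  shows "[ordK m P (- (x * y ^ l)) = ordK m P x] (mod int l)"
  using ordK_mult_power_cong[OF assms] ordK_uminus[of "x * y ^ l"] assms by (simp add: QF_power QF_mult)

lemma ordK_cnj_mult_power_cong:
  assumes "x \<in> QF m" "y \<in> QF m" "x * y ^ l \<noteq> 0"
  shows "[ordK m P (cnj (x * y ^ l)) = ordK m P (cnj x)] (mod int l)"
    "[ordK m P (- cnj (x * y ^ l)) = ordK m P (cnj x)] (mod int l)"
  using ordK_mult_power_cong[OF QF_cnj[OF assms(1)] QF_cnj[OF assms(2)], of l]
    ordK_uminus_mult_power_cong[OF QF_cnj[OF assms(1)] QF_cnj[OF assms(2)], of l] assms(3)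
  by simp_all

lemma zero_sum_not_pw_distinct_mod:
  assumes "x \<in> QF m" "y \<in> QF m" "z \<in> QF m" "y \<noteq> 0" "z \<noteq> 0" "x + y + z = 0"
    and "x \<noteq> 0 \<Longrightarrow> [ordK m P x = a] (mod int l)"
    and "[ordK m P y = b] (mod int l)" "[ordK m P z = c] (mod int l)"
  shows "\<not> pw_distinct_mod l a b c"
proof (cases "x = 0")
  case True
  then have "y = - z"
    using assms(6) by (simp add: eq_neg_iff_add_eq_0)
  then have "ordK m P y = ordK m P z"
    using assms(3,5) ordK_uminus by simp
  then have "[ordK m P y = c] (mod int l)"
    using assms(9) by simp
  then have "[b = c] (mod int l)"
    by (rule cong_sym_trans[OF assms(8)])
  then show ?thesis
    by (simp add: pw_distinct_mod_def)
next
  case False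
  then have cx: "[ordK m P x = a] (mod int l)"
    using assms(7) by simp
  have "ordK m P x = ordK m P y \<or> ordK m P x = ordK m P z \<or> ordK m P y = ordK m P z"
    using ordK_zero_sum assms(1-6) False by blast
  then have "[a = b] (mod int l) \<or> [a = c] (mod int l) \<or> [b = c] (mod int l)"
    using cong_sym_trans[OF cx, of b] cong_sym_trans[OF cx, of c]
      cong_sym_trans[OF assms(8), of c] assms(8,9) by auto
  then show ?thesis
    by (auto simp: pw_distinct_mod_def)
qed

lemma no_solution_if_pw_distinct_mod:
  fixes v n :: nat and \<sigma> :: int
  assumes "v > 0" "n > 0" "m > 0" "\<epsilon> \<in> QF m" "\<epsilon> \<noteq> 0" "\<eta> \<in> QF m"
    and distinct:
      "pw_distinct_mod l (ordK m P (of_nat v)) (ordK m P (of_nat n * sqrt_neg m)) (ordK m P \<epsilon>)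
       \<or> pw_distinct_mod l (ordK m P (2 * of_nat v)) (ordK m P \<epsilon>) (ordK m P (cnj \<epsilon>))
       \<or> pw_distinct_mod l (ordK m P (2 * of_nat n * sqrt_neg m)) (ordK m P \<epsilon>) (ordK m P (cnj \<epsilon>))"
  shows "of_nat v * of_int \<sigma> ^ l + of_nat n * sqrt_neg m \<noteq> \<epsilon> * \<eta> ^ l"
proof
  define A where "A = of_nat v * (of_int \<sigma> :: complex) ^ l"
  define B where "B = of_nat n * sqrt_neg m"
  define C where "C = \<epsilon> * \<eta> ^ l"
  assume "of_nat v * of_int \<sigma> ^ l + of_nat n * sqrt_neg m = \<epsilon> * \<eta> ^ l"
  then have sum: "A + B = C"
    by (simp add: A_def B_def C_def)
  then have diff: "A - B = cnj C"
    by (metis A_def B_def complex_cnj_add complex_cnj_mult complex_cnj_of_int complex_cnj_of_nat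
        complex_cnj_power cnj_sqrt_neg diff_conv_add_uminus mult_minus_right)
  have QF: "A \<in> QF m" "B \<in> QF m" "C \<in> QF m" "cnj C \<in> QF m"
    unfolding A_def B_def C_def using assms(4,6) by (auto intro!: QF_mult QF_power QF_cnj)
  have "B \<noteq> 0"
    using assms(2,3) by (simp add: B_def)
  then have "C \<noteq> 0"
    using sum diff by auto
  have cong_C: "[ordK m P (- C) = ordK m P \<epsilon>] (mod int l)"
    "[ordK m P (cnj C) = ordK m P (cnj \<epsilon>)] (mod int l)"
    "[ordK m P (- cnj C) = ordK m P (cnj \<epsilon>)] (mod int l)"
    using ordK_uminus_mult_power_cong[OF assms(4,6)] ordK_cnj_mult_power_cong[OF assms(4,6)] \<open>C \<noteq> 0\<close>
    by (simp_all add: C_def)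
  have "A \<noteq> 0 \<Longrightarrow> [ordK m P A = ordK m P (of_nat v)] (mod int l)"
    using ordK_mult_power_cong[of "of_nat v" "of_int \<sigma>" l] by (simp add: A_def)
  then have case_i: "\<not> pw_distinct_mod l (ordK m P (of_nat v)) (ordK m P B) (ordK m P \<epsilon>)"
    using QF sum \<open>B \<noteq> 0\<close> \<open>C \<noteq> 0\<close> cong_C
    by (intro zero_sum_not_pw_distinct_mod[of A B "- C"]) auto
  have QF2: "2 * A \<in> QF m" "2 * B \<in> QF m" "- C \<in> QF m" "- cnj C \<in> QF m"
    using QF_mult[OF QF_of_int[of 2]] QF_uminus QF by simp_all
  have zero_sums: "2 * A + - C + - cnj C = 0" "2 * B + - C + cnj C = 0"
    using sum diff by (simp_all add: algebra_simps)
  have "2 * A \<noteq> 0 \<Longrightarrow> [ordK m P (2 * A) = ordK m P (2 * of_nat v)] (mod int l)"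
    using ordK_mult_power_cong[of "2 * of_nat v" "of_int \<sigma>" l] QF_of_nat[of "2 * v" m]
    by (simp add: A_def mult.assoc)
  then have case_ii: "\<not> pw_distinct_mod l (ordK m P (2 * of_nat v)) (ordK m P \<epsilon>) (ordK m P (cnj \<epsilon>))"
    using QF2 zero_sums \<open>C \<noteq> 0\<close> cong_C
    by (intro zero_sum_not_pw_distinct_mod[of "2 * A" "- C" "- cnj C"]) auto
  have case_iii: "\<not> pw_distinct_mod l (ordK m P (2 * B)) (ordK m P \<epsilon>) (ordK m P (cnj \<epsilon>))"
    using QF QF2 zero_sums \<open>C \<noteq> 0\<close> cong_C
    by (intro zero_sum_not_pw_distinct_mod[of "2 * B" "- C" "cnj C"]) auto
  show False
    using distinct case_i case_ii case_iii by (simp add: B_def mult.assoc)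
qed

end

theorem lemma9p1:
  fixes l R S T S' v u m n :: nat and \<epsilon> :: complex and q :: "complex set"
  assumes "prime l"
    and "R > 0" and "S > 0" and "T > 0"
    and "coprime R S" and "coprime R T" and "coprime S T"
    and "S' = (\<Prod>p \<in> {p \<in> prime_factors S. odd (multiplicity p S)}. p)"
    and "v > 0" and "S * S' = v ^ 2"
    and "u = R * S'"
    and "m > 0" and "squarefree m" and "n > 0" and "T * S' = m * n ^ 2"
    and "E_rep m l u n \<epsilon>"
    and "prime_ideal_OK m q"
    and "pw_distinct_mod l (ordK m q (of_nat v)) (ordK m q (of_nat n * sqrt_neg m)) (ordK m q \<epsilon>)
         \<or> pw_distinct_mod l (ordK m q (2 * of_nat v)) (ordK m q \<epsilon>) (ordK m q (cnj \<epsilon>))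
         \<or> pw_distinct_mod l (ordK m q (2 * of_nat n * sqrt_neg m)) (ordK m q \<epsilon>) (ordK m q (cnj \<epsilon>))"
  shows "\<not> (\<exists>\<sigma>::int. \<exists>\<eta> \<in> QF m.
            of_nat v * of_int \<sigma> ^ l + of_nat n * sqrt_neg m = \<epsilon> * \<eta> ^ l)"
proof -
  interpret OK_prime_ideal m q
    by (rule OK_prime_ideal.intro) fact
  have "\<epsilon> \<in> QF m" "\<epsilon> \<noteq> 0"
    using \<open>E_rep m l u n \<epsilon>\<close> by (simp_all add: E_rep_def selmer_rep_def)
  then show ?thesis
    using no_solution_if_pw_distinct_mod[of v n \<epsilon>] assms(9,12,14,18) by blast
qed

end
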